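(* Let $x\in\Gamma$ and let $r$ be an eigenvalue of the finite symmetric matrix $J_x$. Then at least one of the following holds: (a) $P_{x,x'}(r)=0$; (b) there exist a vertex $y\in\Gamma_x$ and two distinct vertices $y_1,y_2\in N_y$ such that $P_{y_1,y}(r)=P_{y_2,y}(r)=0$.
   Context: Let $\Gamma$ be an infinite connected tree whose vertices are arranged in levels $\ell(x)\in\{0,1,2,\dots\}$: every vertex $x$ is adjacent to exactly one vertex $x'$ with $\ell(x')=\ell(x)+1$; for $\ell(x)\ge 1$ the set $N_x=\{y:\ y'=x\}$ of neighbours of $x$ on level $\ell(x)-1$ is finite and nonempty; $N_x=\emptyset$ if $\ell(x)=0$; there are no other edges. For $x\in\Gamma$, $\Gamma_x$ is the finite subtree consisting of $x$ and all its descendants, and $\Gamma'_x=\Gamma_x\cup\{x'\}$. Fix numbers $\lambda_x>0$ and $\beta_x\in\mathbb R$, $x\in\Gamma$. The Jacobi matrix $J$ acts on functions $v:\Gamma\to\mathbb C$ by $(Jv)(x)=\lambda_x v(x')+\beta_x v(x)+\sum_{y\in N_x}\lambda_y v(y)$. For $x\in\Gamma$, $J_x=P_xJP_x$ restricted to $\ell^2(\Gamma_x)$, where $P_x$ is the orthogonal projection of $\ell^2(\Gamma)$ onto $\ell^2(\Gamma_x)$; i.e. for $w:\Gamma_x\to\mathbb C$ and $t\in\Gamma_x$, $(J_xw)(t)=\beta_tw(t)+\sum_{s\in N_t}\lambda_sw(s)+\lambda_tw(t')$, where the last term is omitted when $t=x$. The polynomials $P_{x,t}$ ($x\in\Gamma$,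 $t\in\Gamma'_x$) are defined recursively on $\ell(x)$: if $\ell(x)=0$, $P_{x,x}=1$, $P_{x,x'}(z)=(z-\beta_x)/\lambda_x$. If $\ell(x)\ge1$: $P_{x,x}$ is the monic least common multiple of $\{P_{y,x}:\ y\in N_x\}$; for $y\in N_x$ and $t\in\Gamma_y$, $P_{x,t}=P_{x,x}P_{y,t}/P_{y,x}$; and $P_{x,x'}=\lambda_x^{-1}\big((z-\beta_x)P_{x,x}-\sum_{y\in N_x}\lambda_yP_{x,y}\big)$. (These are polynomials with real coefficients.) *)

theory Defs
  imports Complex_Main "HOL-Computational_Algebra.Polynomial_Factorial" "HOL-Computational_Algebra.Field_as_Ring"
begin

text \<open>The tree Gamma is encoded by its vertex type 'v, the map par (x to x') and the level
  function lev.  N_x = children par x, Gamma_x = subtree par x.\<close>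

definition children :: "('v \<Rightarrow> 'v) \<Rightarrow> 'v \<Rightarrow> 'v set" where
  "children par x = {y. par y = x}"

definition subtree :: "('v \<Rightarrow> 'v) \<Rightarrow> 'v \<Rightarrow> 'v set" where
  "subtree par x = {t. \<exists>n. (par ^^ n) t = x}"

definition level_tree :: "('v \<Rightarrow> 'v) \<Rightarrow> ('v \<Rightarrow> nat) \<Rightarrow> bool" where
  "level_tree par lev \<longleftrightarrow>
     (\<forall>x. lev (par x) = Suc (lev x)) \<and>
     (\<forall>x. finite (children par x)) \<and>
     (\<forall>x. children par x = {} \<longleftrightarrow> lev x = 0) \<and>
     (\<forall>x y. \<exists>m n. (par ^^ m) x = (par ^^ n) y)"

text \<open>The truncated Jacobi matrix J_x applied to w, evaluated at t in Gamma_x.\<close>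
definition Jsub :: "('v \<Rightarrow> 'v) \<Rightarrow> ('v \<Rightarrow> real) \<Rightarrow> ('v \<Rightarrow> real) \<Rightarrow> 'v
                    \<Rightarrow> ('v \<Rightarrow> complex) \<Rightarrow> 'v \<Rightarrow> complex" where
  "Jsub par lam bet x w t =
     of_real (bet t) * w t + (\<Sum>s\<in>children par t. of_real (lam s) * w s)
     + (if t = x then 0 else of_real (lam t) * w (par t))"

definition is_eigenvalue_Jsub :: "('v \<Rightarrow> 'v) \<Rightarrow> ('v \<Rightarrow> real) \<Rightarrow> ('v \<Rightarrow> real) \<Rightarrow> 'v
                    \<Rightarrow> complex \<Rightarrow> bool" where
  "is_eigenvalue_Jsub par lam bet x r \<longleftrightarrow>
     (\<exists>w. (\<exists>t\<in>subtree par x. w t \<noteq> 0) \<and>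
          (\<forall>t\<in>subtree par x. Jsub par lam bet x w t = r * w t))"

text \<open>Ppoly_aux n x t is P_{x,t} for a vertex x of level n (junk otherwise, or for t outside
  Gamma'_x).  For t in Gamma_y, y in N_x, the vertex y is the ancestor of t on level n.\<close>
fun Ppoly_aux :: "('v \<Rightarrow> 'v) \<Rightarrow> ('v \<Rightarrow> nat) \<Rightarrow> ('v \<Rightarrow> real) \<Rightarrow> ('v \<Rightarrow> real)
                   \<Rightarrow> nat \<Rightarrow> 'v \<Rightarrow> 'v \<Rightarrow> real poly" where
  "Ppoly_aux par lev lam bet 0 x t =
     (if t = x then 1 else if t = par x then smult (1 / lam x) [:- bet x, 1:] else 0)"
| "Ppoly_aux par lev lam bet (Suc n) x t =
     (let Pxx = Lcm ((\<lambda>y. Ppoly_aux par lev lam bet n y x) ` children par x);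
          Pc = (\<lambda>y s. Pxx * Ppoly_aux par lev lam bet n y s div Ppoly_aux par lev lam bet n y x)
      in if t = x then Pxx
         else if t = par x then
           smult (1 / lam x) ([:- bet x, 1:] * Pxx - (\<Sum>y\<in>children par x. smult (lam y) (Pc y y)))
         else Pc ((par ^^ (n - lev t)) t) t)"

definition Ppoly :: "('v \<Rightarrow> 'v) \<Rightarrow> ('v \<Rightarrow> nat) \<Rightarrow> ('v \<Rightarrow> real) \<Rightarrow> ('v \<Rightarrow> real)
                   \<Rightarrow> 'v \<Rightarrow> 'v \<Rightarrow> real poly" where
  "Ppoly par lev lam bet x t = Ppoly_aux par lev lam bet (lev x) x t"

end

theory Submission
  imports Defs
begin

text \<open>Solve the eigenvalue equations from the leaves upwards. If no vertex \<open>y\<close> has two children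
  \<open>y1, y2\<close> with \<open>P_{y1,y}(r) = P_{y2,y}(r) = 0\<close>, then on every subtree \<open>\<Gamma>_t\<close> an eigenvector
  has the form \<open>w(s) = a_t P_{t,s}(r)\<close> for one constant \<open>a_t\<close>, and the defect of the equation
  at \<open>t\<close>, \<open>(r - \<beta>_t) w(t) - \<Sum>_c \<lambda>_c w(c)\<close>, equals \<open>\<lambda>_t a_t P_{t,t'}(r)\<close>. The constants of
  the children are matched through the lcm \<open>P_{t,t}\<close>: at most one factor \<open>P_{c,t}\<close> vanishes at
  \<open>r\<close>, and if one does, its cofactor \<open>P_{t,t} / P_{c,t}\<close> does not. At the root \<open>x\<close> the defect
  is \<open>0\<close> while \<open>a_x \<noteq> 0\<close>, hence \<open>P_{x,x'}(r) = 0\<close>.\<close>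

lemma map_poly_of_real_add [simp]:
  "map_poly (of_real :: real \<Rightarrow> 'a::{real_algebra_1,comm_ring_1}) (p + q) =
     map_poly of_real p + map_poly of_real q"
  by (rule poly_eqI) (simp add: coeff_map_poly)

lemma map_poly_of_real_diff [simp]:
  "map_poly (of_real :: real \<Rightarrow> 'a::{real_algebra_1,comm_ring_1}) (p - q) =
     map_poly of_real p - map_poly of_real q"
  by (rule poly_eqI) (simp add: coeff_map_poly)

lemma map_poly_of_real_smult [simp]:
  "map_poly (of_real :: real \<Rightarrow> 'a::{real_algebra_1,comm_ring_1}) (smult c p) =
     smult (of_real c) (map_poly of_real p)"
  by (rule poly_eqI) (simp add: coeff_map_poly)

lemma map_poly_of_real_mult [simp]:
  "map_poly (of_real :: real \<Rightarrow> 'a::{real_algebra_1,comm_ring_1}) (p * q) =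
     map_poly of_real p * map_poly of_real q"
  by (induction p) (simp_all add: map_poly_pCons)

lemma map_poly_of_real_sum:
  "map_poly (of_real :: real \<Rightarrow> 'a::{real_algebra_1,comm_ring_1}) (\<Sum>i\<in>A. f i) =
     (\<Sum>i\<in>A. map_poly of_real (f i))"
  by (induction A rule: infinite_finite_induct) simp_all

lemma map_poly_of_real_prod:
  "map_poly (of_real :: real \<Rightarrow> 'a::{real_algebra_1,comm_ring_1}) (\<Prod>i\<in>A. f i) =
     (\<Prod>i\<in>A. map_poly of_real (f i))"
  by (induction A rule: infinite_finite_induct) simp_all

lemma poly_of_real_root_dvd:
  fixes r :: "'a::{real_algebra_1,comm_ring_1}"
  assumes "q dvd p" and "poly (map_poly of_real q) r = 0"
  shows "poly (map_poly of_real p) r = 0"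
  using assms by (elim dvdE) simp

lemma poly_of_real_Lcm_nonzero:
  fixes A :: "real poly set" and r :: "'a::real_field"
  assumes "finite A" and "\<forall>p\<in>A. poly (map_poly of_real p) r \<noteq> 0"
  shows "poly (map_poly of_real (Lcm A)) r \<noteq> 0"
proof
  assume "poly (map_poly of_real (Lcm A)) r = 0"
  moreover have "Lcm A dvd (\<Prod>p\<in>A. p)"
    using assms(1) by (intro Lcm_least) auto
  ultimately have "poly (map_poly of_real (\<Prod>p\<in>A. p)) r = 0"
    by (rule poly_of_real_root_dvd[rotated])
  then show False
    using assms by (simp add: map_poly_of_real_prod poly_prod)
qed

lemma poly_of_real_Lcm_div_nonzero:
  fixes B :: "real poly set" and r :: "'a::real_field"
  assumes "finite B" and "p \<noteq> 0" and "\<forall>q\<in>B. poly (map_poly of_real q) r \<noteq> 0"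
  shows "poly (map_poly of_real (Lcm (insert p B) div p)) r \<noteq> 0"
proof
  assume root: "poly (map_poly of_real (Lcm (insert p B) div p)) r = 0"
  have "p * (Lcm (insert p B) div p) = Lcm (insert p B)"
    by simp
  also have "\<dots> dvd p * Lcm B"
    by (simp add: lcm_least)
  finally have "Lcm (insert p B) div p dvd Lcm B"
    using \<open>p \<noteq> 0\<close> dvd_times_left_cancel_iff by blast
  then have "poly (map_poly of_real (Lcm B)) r = 0"
    using root by (rule poly_of_real_root_dvd)
  then show False
    using poly_of_real_Lcm_nonzero assms by blast
qed

lemma common_scale_by_Lcm:
  fixes p :: "'c \<Rightarrow> real poly" and A :: "'c \<Rightarrow> 'a::real_field"
  assumes "finite C" and nonzero: "\<forall>c\<in>C. p c \<noteq> 0"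
    and at_most_one_root: "\<forall>c\<in>C. \<forall>c'\<in>C. c \<noteq> c' \<longrightarrow>
          poly (map_poly of_real (p c)) r \<noteq> 0 \<or> poly (map_poly of_real (p c')) r \<noteq> 0"
    and scaled: "\<forall>c\<in>C. w = A c * poly (map_poly of_real (p c)) r"
  shows "\<exists>a. w = a * poly (map_poly of_real (Lcm (p ` C))) r \<and>
           (\<forall>c\<in>C. A c = a * poly (map_poly of_real (Lcm (p ` C) div p c)) r)"
proof -
  define L where "L = Lcm (p ` C)"
  let ?ev = "\<lambda>q. poly (map_poly of_real q) r"
  have factor: "?ev L = ?ev (p c) * ?ev (L div p c)" if "c \<in> C" for c
    using that unfolding L_def
    by (metis dvd_Lcm dvd_mult_div_cancel image_eqI map_poly_of_real_mult poly_mult)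
  show ?thesis
  proof (cases "\<exists>c\<in>C. ?ev (p c) = 0")
    case True
    then obtain c1 where c1: "c1 \<in> C" "?ev (p c1) = 0" by blast
    have others: "?ev (p c) \<noteq> 0" if "c \<in> C" "c \<noteq> c1" for c
      using at_most_one_root that c1 by blast
    have "p ` C = insert (p c1) (p ` (C - {c1}))"
      using c1 by blast
    then have "?ev (L div p c1) \<noteq> 0"
      unfolding L_def using poly_of_real_Lcm_div_nonzero[of "p ` (C - {c1})" "p c1" r]
      using \<open>finite C\<close> nonzero c1 others by auto
    moreover have "w = 0" "?ev L = 0"
      using scaled factor c1 by auto
    moreover have "A c = 0 \<and> ?ev (L div p c) = 0" if "c \<in> C" "c \<noteq> c1" for c
      using scaled factor \<open>w = 0\<close> \<open>?ev L = 0\<close> others[OF that] that by auto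
    ultimately show ?thesis
      unfolding L_def[symmetric] using c1
      by (intro exI[of _ "A c1 / ?ev (L div p c1)"]) force
  next
    case False
    then have "?ev L \<noteq> 0"
      unfolding L_def using \<open>finite C\<close> by (intro poly_of_real_Lcm_nonzero) auto
    then show ?thesis
      unfolding L_def[symmetric] using False scaled factor
      by (intro exI[of _ "w / ?ev L"]) (auto simp: field_simps)
  qed
qed

lemma degree_linear_mult_diff:
  fixes L q :: "'a::field poly"
  assumes "L \<noteq> 0" and "degree q \<le> degree L"
  shows "degree ([:- b, 1:] * L - q) = Suc (degree L)"
proof -
  have "degree ([:- b, 1:] * L) = Suc (degree L)"
    using assms(1) by (subst degree_mult_eq) simp_all
  then show ?thesis
    using assms(2) degree_add_eq_left[of "- q" "[:- b, 1:] * L"] by simp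
qed

definition residual :: "('v \<Rightarrow> 'v) \<Rightarrow> ('v \<Rightarrow> real) \<Rightarrow> ('v \<Rightarrow> real) \<Rightarrow> complex
                        \<Rightarrow> ('v \<Rightarrow> complex) \<Rightarrow> 'v \<Rightarrow> complex" where
  "residual par lam bet r w t =
     (r - of_real (bet t)) * w t - (\<Sum>c\<in>children par t. of_real (lam c) * w c)"

lemma Jsub_eigen_iff:
  "Jsub par lam bet x w t = r * w t \<longleftrightarrow>
     residual par lam bet r w t = (if t = x then 0 else of_real (lam t) * w (par t))"
  by (auto simp: Jsub_def residual_def algebra_simps)

context
  fixes par :: "'v \<Rightarrow> 'v" and lev :: "'v \<Rightarrow> nat"
  assumes tree: "level_tree par lev"
begin

lemma lev_par: "lev (par x) = Suc (lev x)"
  using tree unfolding level_tree_def by blast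

lemma finite_children: "finite (children par x)"
  using tree unfolding level_tree_def by blast

lemma children_eq_empty_iff: "children par x = {} \<longleftrightarrow> lev x = 0"
  using tree unfolding level_tree_def by blast

lemma par_neq_self: "par t \<noteq> t"
  using lev_par[of t] by auto

lemma par_child: "c \<in> children par t \<Longrightarrow> par c = t"
  by (simp add: children_def)

lemma lev_child: "c \<in> children par t \<Longrightarrow> lev t = Suc (lev c)"
  by (auto simp: children_def lev_par)

lemma lev_funpow_par: "lev ((par ^^ k) s) = lev s + k"
  by (induction k) (auto simp: lev_par)

lemma subtree_self [simp]: "t \<in> subtree par t"
  unfolding subtree_def by (auto intro: exI[of _ 0])

lemma subtree_lev:
  assumes "s \<in> subtree par t"
  shows "lev s \<le> lev t" and "(par ^^ (lev t - lev s)) s = t"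
  using assms unfolding subtree_def by (auto simp: lev_funpow_par)

lemma subtree_child_subset:
  assumes "c \<in> children par t"
  shows "subtree par c \<subseteq> subtree par t - {t}"
proof
  fix s assume "s \<in> subtree par c"
  then obtain n where "(par ^^ n) s = c"
    unfolding subtree_def by blast
  then have "(par ^^ Suc n) s = t"
    using assms by (simp add: children_def)
  moreover have "lev s < lev t"
    using subtree_lev(1)[OF \<open>s \<in> subtree par c\<close>] lev_child[OF assms] by simp
  ultimately show "s \<in> subtree par t - {t}"
    unfolding subtree_def by blast
qed

lemma subtree_cases:
  assumes "s \<in> subtree par t" and "s \<noteq> t"
  obtains c where "c \<in> children par t" and "s \<in> subtree par c"
proof -
  from assms(1) obtain n where n: "(par ^^ n) s = t"
    unfolding subtree_def by blast
  with assms(2) obtain m where "n = Suc m"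
    by (cases n) auto
  with n have "par ((par ^^ m) s) = t"
    by simp
  then show thesis
    using that unfolding children_def subtree_def by blast
qed

lemma Ppoly_child_aux:
  assumes "lev t = Suc n" and "y \<in> children par t"
  shows "Ppoly par lev lam bet y s = Ppoly_aux par lev lam bet n y s"
  using assms lev_child by (simp add: Ppoly_def)

text \<open>The recursion for \<open>P_{t,\<cdot>}\<close> in a form that holds uniformly on all levels: on level 0
  there are no children, \<open>Lcm {} = 1\<close> and the sum over children vanishes.\<close>

lemma Ppoly_self:
  "Ppoly par lev lam bet t t = Lcm ((\<lambda>y. Ppoly par lev lam bet y t) ` children par t)"
proof (cases "lev t")
  case 0
  then show ?thesis
    by (simp add: Ppoly_def children_eq_empty_iff[THEN iffD2])
next
  case (Suc n)
  then show ?thesis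
    by (simp add: Ppoly_def[of _ _ _ _ t] Ppoly_child_aux cong: image_cong)
qed

lemma Ppoly_self_mult_div:
  assumes "y \<in> children par t"
  shows "Ppoly par lev lam bet t t * q div Ppoly par lev lam bet y t =
         Ppoly par lev lam bet t t div Ppoly par lev lam bet y t * q"
  using assms by (metis Ppoly_self div_mult_swap dvd_Lcm image_eqI mult.commute)

lemma Ppoly_parent:
  "Ppoly par lev lam bet t (par t) = smult (1 / lam t)
     ([:- bet t, 1:] * Ppoly par lev lam bet t t -
      (\<Sum>y\<in>children par t. smult (lam y)
         (Ppoly par lev lam bet t t div Ppoly par lev lam bet y t * Ppoly par lev lam bet y y)))"
proof (cases "lev t")
  case 0
  then show ?thesis
    by (simp add: Ppoly_def par_neq_self children_eq_empty_iff[THEN iffD2])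
next
  case (Suc n)
  then have "Ppoly par lev lam bet t (par t) = smult (1 / lam t)
     ([:- bet t, 1:] * Ppoly par lev lam bet t t -
      (\<Sum>y\<in>children par t. smult (lam y)
         (Ppoly par lev lam bet t t * Ppoly par lev lam bet y y div Ppoly par lev lam bet y t)))"
    by (simp add: Ppoly_def[of _ _ _ _ t] par_neq_self Ppoly_child_aux Let_def
        cong: image_cong sum.cong)
  then show ?thesis
    by (simp add: Ppoly_self_mult_div cong: sum.cong)
qed

lemma Ppoly_descendant:
  assumes "c \<in> children par t" and "s \<in> subtree par c"
  shows "Ppoly par lev lam bet t s =
         Ppoly par lev lam bet t t div Ppoly par lev lam bet c t * Ppoly par lev lam bet c s"
proof -
  obtain n where n: "lev t = Suc n" "lev c = n"
    using lev_child[OF assms(1)] by blast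
  then have "lev s \<le> n" "(par ^^ (n - lev s)) s = c"
    using subtree_lev[OF assms(2)] by auto
  moreover have "s \<noteq> t" "s \<noteq> par t"
    using \<open>lev s \<le> n\<close> n lev_par[of t] by auto
  ultimately have "Ppoly par lev lam bet t s =
      Ppoly par lev lam bet t t * Ppoly par lev lam bet c s div Ppoly par lev lam bet c t"
    using n assms by (simp add: Ppoly_def[of _ _ _ _ t] Ppoly_child_aux Let_def cong: image_cong)
  then show ?thesis
    using assms(1) by (simp add: Ppoly_self_mult_div)
qed

text \<open>Only the nonvanishing is used later; the degree identity is what carries the induction.\<close>

lemma Ppoly_nonzero_degree:
  assumes lam_pos: "\<forall>v. lam v > 0"
  shows "Ppoly par lev lam bet t t \<noteq> 0 \<and>
         degree (Ppoly par lev lam bet t (par t)) = Suc (degree (Ppoly par lev lam bet t t))"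
proof (induction "lev t" arbitrary: t rule: less_induct)
  case less
  let ?P = "Ppoly par lev lam bet"
  have IH: "?P c c \<noteq> 0" "degree (?P c t) = Suc (degree (?P c c))" if "c \<in> children par t" for c
    using less lev_child[OF that] par_child[OF that] by auto
  then have "?P c t \<noteq> 0" if "c \<in> children par t" for c
    using that by fastforce
  then have L_nonzero: "?P t t \<noteq> 0"
    by (auto simp: Ppoly_self Lcm_0_iff finite_children)
  have "degree (smult (lam c) (?P t t div ?P c t * ?P c c)) \<le> degree (?P t t)"
    if c: "c \<in> children par t" for c
  proof -
    have "?P t t = ?P c t * (?P t t div ?P c t)"
      using c by (metis Ppoly_self dvd_Lcm dvd_mult_div_cancel image_eqI)
    then have "degree (?P t t) = Suc (degree (?P c c)) + degree (?P t t div ?P c t)"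
      using L_nonzero IH[OF c] by (metis degree_mult_eq mult_zero_left mult_zero_right)
    then show ?thesis
      using degree_mult_le[of "?P t t div ?P c t" "?P c c"] degree_smult_le order_trans by fastforce
  qed
  then have "degree (\<Sum>y\<in>children par t. smult (lam y) (?P t t div ?P y t * ?P y y)) \<le> degree (?P t t)"
    by (intro degree_sum_le finite_children)
  then show ?case
    using L_nonzero lam_pos[rule_format, of t] degree_linear_mult_diff
    by (subst Ppoly_parent) simp
qed

lemma Ppoly_child_nonzero:
  assumes "\<forall>v. lam v > 0" and "c \<in> children par t"
  shows "Ppoly par lev lam bet c t \<noteq> 0"
  using Ppoly_nonzero_degree[OF assms(1), of bet c] par_child[OF assms(2)] by fastforce

lemma eigenvector_on_subtree:
  assumes lam_pos: "\<forall>v. lam v > 0"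
    and equations: "\<forall>s\<in>subtree par t - {t}. residual par lam bet r w s = of_real (lam s) * w (par s)"
    and no_common_root: "\<forall>y\<in>subtree par t. \<forall>y1\<in>children par y. \<forall>y2\<in>children par y. y1 \<noteq> y2 \<longrightarrow>
           poly (map_poly of_real (Ppoly par lev lam bet y1 y)) r \<noteq> 0 \<or>
           poly (map_poly of_real (Ppoly par lev lam bet y2 y)) r \<noteq> 0"
  shows "\<exists>a. (\<forall>s\<in>subtree par t. w s = a * poly (map_poly of_real (Ppoly par lev lam bet t s)) r) \<and>
           residual par lam bet r w t =
             of_real (lam t) * a * poly (map_poly of_real (Ppoly par lev lam bet t (par t))) r"
  using equations no_common_root
proof (induction "lev t" arbitrary: t rule: less_induct)
  case less
  let ?P = "Ppoly par lev lam bet"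
  let ?ev = "\<lambda>p. poly (map_poly of_real p) r"
  have "\<forall>c\<in>children par t. \<exists>A. (\<forall>s\<in>subtree par c. w s = A * ?ev (?P c s)) \<and>
            residual par lam bet r w c = of_real (lam c) * A * ?ev (?P c t)"
  proof
    fix c assume c: "c \<in> children par t"
    have lower: "lev c < lev t"
      using lev_child[OF c] by simp
    have equations_c:
      "\<forall>s\<in>subtree par c - {c}. residual par lam bet r w s = of_real (lam s) * w (par s)"
      using less.prems(1) subtree_child_subset[OF c] by blast
    have roots_c: "\<forall>y\<in>subtree par c. \<forall>y1\<in>children par y. \<forall>y2\<in>children par y. y1 \<noteq> y2 \<longrightarrow>
        ?ev (?P y1 y) \<noteq> 0 \<or> ?ev (?P y2 y) \<noteq> 0"
      using less.prems(2) subtree_child_subset[OF c] by blast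
    show "\<exists>A. (\<forall>s\<in>subtree par c. w s = A * ?ev (?P c s)) \<and>
        residual par lam bet r w c = of_real (lam c) * A * ?ev (?P c t)"
      using less.hyps[OF lower equations_c roots_c] par_child[OF c] by simp
  qed
  from bchoice[OF this] obtain A where A: "\<forall>c\<in>children par t.
      (\<forall>s\<in>subtree par c. w s = A c * ?ev (?P c s)) \<and>
      residual par lam bet r w c = of_real (lam c) * A c * ?ev (?P c t)"
    by blast
  have w_t: "w t = A c * ?ev (?P c t)" if c: "c \<in> children par t" for c
  proof -
    have "c \<in> subtree par t - {t}"
      using subtree_child_subset[OF c] subtree_self by blast
    then have "residual par lam bet r w c = of_real (lam c) * w t"
      using less.prems(1) par_child[OF c] by auto
    then show ?thesis
      using A c lam_pos[rule_format, of c] by simp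
  qed
  have "\<exists>a. w t = a * ?ev (Lcm ((\<lambda>c. ?P c t) ` children par t)) \<and>
      (\<forall>c\<in>children par t. A c = a * ?ev (Lcm ((\<lambda>c. ?P c t) ` children par t) div ?P c t))"
    using finite_children Ppoly_child_nonzero[OF lam_pos] less.prems(2) w_t
    by (intro common_scale_by_Lcm) auto
  then obtain a where a: "w t = a * ?ev (?P t t)"
    "\<And>c. c \<in> children par t \<Longrightarrow> A c = a * ?ev (?P t t div ?P c t)"
    unfolding Ppoly_self[symmetric] by blast
  have w_sub: "w s = a * ?ev (?P t s)" if s: "s \<in> subtree par t" for s
  proof (cases "s = t")
    case False
    then obtain c where "c \<in> children par t" "s \<in> subtree par c"
      using s subtree_cases by blast
    then show ?thesis
      using A a(2) Ppoly_descendant by simp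
  qed (use a(1) in simp)
  have "residual par lam bet r w t = a * ((r - of_real (bet t)) * ?ev (?P t t) -
      (\<Sum>c\<in>children par t. of_real (lam c) * (?ev (?P t t div ?P c t) * ?ev (?P c c))))"
    using w_sub
    by (simp add: residual_def subtree_child_subset A a(2) algebra_simps sum_distrib_left)
  also have "\<dots> = of_real (lam t) * a * ?ev (?P t (par t))"
    using lam_pos[rule_format, of t]
    by (subst Ppoly_parent) (simp add: map_poly_of_real_sum map_poly_pCons poly_sum algebra_simps)
  finally show ?case
    using w_sub by blast
qed

end

theorem theorem2:
  fixes par :: "'v \<Rightarrow> 'v" and lev :: "'v \<Rightarrow> nat"
    and lam bet :: "'v \<Rightarrow> real" and x :: 'v and r :: complex
  assumes tree: "level_tree par lev"
    and lam_pos: "\<forall>v. lam v > 0"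
    and eig: "is_eigenvalue_Jsub par lam bet x r"
  shows "poly (map_poly of_real (Ppoly par lev lam bet x (par x))) r = 0 \<or>
         (\<exists>y\<in>subtree par x. \<exists>y1\<in>children par y. \<exists>y2\<in>children par y. y1 \<noteq> y2 \<and>
            poly (map_poly of_real (Ppoly par lev lam bet y1 y)) r = 0 \<and>
            poly (map_poly of_real (Ppoly par lev lam bet y2 y)) r = 0)"
proof (rule disjCI)
  assume no_common_root: "\<not> (\<exists>y\<in>subtree par x. \<exists>y1\<in>children par y. \<exists>y2\<in>children par y. y1 \<noteq> y2 \<and>
            poly (map_poly of_real (Ppoly par lev lam bet y1 y)) r = 0 \<and>
            poly (map_poly of_real (Ppoly par lev lam bet y2 y)) r = 0)"
  from eig obtain w where nonzero: "\<exists>t\<in>subtree par x. w t \<noteq> 0"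
    and "\<forall>t\<in>subtree par x. Jsub par lam bet x w t = r * w t"
    unfolding is_eigenvalue_Jsub_def by blast
  then have equations:
      "\<forall>s\<in>subtree par x - {x}. residual par lam bet r w s = of_real (lam s) * w (par s)"
    and root_equation: "residual par lam bet r w x = 0"
    using subtree_self[OF tree] by (auto simp: Jsub_eigen_iff)
  obtain a where a:
      "\<forall>s\<in>subtree par x. w s = a * poly (map_poly of_real (Ppoly par lev lam bet x s)) r"
      "residual par lam bet r w x =
         of_real (lam x) * a * poly (map_poly of_real (Ppoly par lev lam bet x (par x))) r"
    using eigenvector_on_subtree[OF tree lam_pos equations] no_common_root by blast
  have "a \<noteq> 0"
    using a(1) nonzero by auto
  then show "poly (map_poly of_real (Ppoly par lev lam bet x (par x))) r = 0"
    using a(2) root_equation lam_pos[rule_format, of x] by simp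
qed

end
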